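(* For any $\eta\in(0,\tfrac12)$ and any sequence of true labels $y_1,\dots,y_T$ (and expert advice), the probabilities $p_1,\dots,p_T$ and estimated losses $\hat\ell_1,\dots,\hat\ell_T$ produced by EXP4.AT with learning rate $\eta$ satisfy $$\sum_{t=1}^T\sum_{y\in\{0,1\}}p_t^y\hat\ell_t(y) - \inf_{j\in[N]}\sum_{t=1}^T\hat\ell_t(\mathcal{E}^j_t) \le \frac{\ln N}{\eta} + \eta\sum_{t=1}^T\hat\ell_t(1) + \eta\sum_{t=1}^T p_t^1(1-p_t^1)\hat\ell_t(0)^2 + \eta\sum_{t=1}^T p_t^1\hat\ell_t(1)^2.$$
   Context: Binary prediction with $N$ experts under apple tasting feedback. EXP4.AT with learning rate $\eta\in(0,\tfrac12)$: let $q_1$ be uniform on $[N]$. In each round $t=1,\dots,T$: receive advice $\mathcal{E}^1_t,\dots,\mathcal{E}^N_t\in\{0,1\}$; set $p_t^1=(1-\eta)\sum_{i=1}^N q_t^i\mathcal{E}^i_t+\eta$ and $p_t^0=1-p_t^1$; predict $\hat y_t=1$ with probability $p_t^1$ and $\hat y_t=0$ otherwise; the true label $y_t$ is observed only if $\hat y_t=1$; define $\hat\ell_t(y)=\mathbb{1}\{y\ne y_t\}\mathbb{1}\{\hat y_t=1\}/p_t^1$ for $y\in\{0,1\}$; update $q_{t+1}^i=\frac{q_t^i\exp(-\eta\hat\ell_t(\mathcal{E}^i_t))}{\sum_{j=1}^N q_t^j\exp(-\eta\hat\ell_t(\mathcal{E}^j_t))}$. The inequality holds for every realization of the algorithm's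 random predictions. *)

theory Defs
  imports Complex_Main
begin

(* Rounds are indexed t = 0,...,T-1 (round t here is round t+1 of the paper);
   experts are indexed i = 0,...,N-1; labels/advice/predictions in {0,1} are
   represented as bool (True = 1). *)

definition ind :: "bool \<Rightarrow> real" where
  "ind b = (if b then 1 else 0)"

definition exp4at_prob1 :: "real \<Rightarrow> nat \<Rightarrow> (nat \<Rightarrow> bool) \<Rightarrow> (nat \<Rightarrow> real) \<Rightarrow> real" where
  "exp4at_prob1 eta N Et qv = (1 - eta) * (\<Sum>i<N. qv i * ind (Et i)) + eta"

definition exp4at_lhat :: "bool \<Rightarrow> bool \<Rightarrow> real \<Rightarrow> bool \<Rightarrow> real" where
  "exp4at_lhat yt yht p1 b = ind (b \<noteq> yt) * ind yht / p1"

(* weights q_t of EXP4.AT; E t i = advice of expert i in round t, y t = true label,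
   yh t = realized prediction *)
fun exp4at_q :: "real \<Rightarrow> nat \<Rightarrow> (nat \<Rightarrow> nat \<Rightarrow> bool) \<Rightarrow> (nat \<Rightarrow> bool) \<Rightarrow> (nat \<Rightarrow> bool)
                  \<Rightarrow> nat \<Rightarrow> nat \<Rightarrow> real" where
  "exp4at_q eta N E y yh 0 = (\<lambda>i. 1 / real N)"
| "exp4at_q eta N E y yh (Suc t) =
     (let q = exp4at_q eta N E y yh t;
          p = exp4at_prob1 eta N (E t) q;
          l = exp4at_lhat (y t) (yh t) p;
          Z = (\<Sum>j<N. q j * exp (- eta * l (E t j)))
      in (\<lambda>i. q i * exp (- eta * l (E t i)) / Z))"

definition exp4at_p :: "real \<Rightarrow> nat \<Rightarrow> (nat \<Rightarrow> nat \<Rightarrow> bool) \<Rightarrow> (nat \<Rightarrow> bool) \<Rightarrow> (nat \<Rightarrow> bool)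
                  \<Rightarrow> nat \<Rightarrow> real" where
  "exp4at_p eta N E y yh t = exp4at_prob1 eta N (E t) (exp4at_q eta N E y yh t)"

definition exp4at_l :: "real \<Rightarrow> nat \<Rightarrow> (nat \<Rightarrow> nat \<Rightarrow> bool) \<Rightarrow> (nat \<Rightarrow> bool) \<Rightarrow> (nat \<Rightarrow> bool)
                  \<Rightarrow> nat \<Rightarrow> bool \<Rightarrow> real" where
  "exp4at_l eta N E y yh t b = exp4at_lhat (y t) (yh t) (exp4at_p eta N E y yh t) b"

end

theory Submission
  imports Defs
begin

text \<open>
  Each update multiplies the weight of expert j by
  exp (-eta * loss) and renormalises by Z_t, so ln q_T(j) telescopes to
  -ln N - eta * (cumulative estimated loss of j) - sum_t ln Z_t, and q_T(j) <= 1 turns this into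
  a regret bound once ln Z_t is bounded in every round. The estimated losses vanish unless
  the prediction is 1, and then one of them is 1/p and the other 0; so with Q the weight of the
  experts advising 1 and x = eta/p, Z_t is Q e^-x + (1 - Q) or Q + (1 - Q) e^-x. The exploration
  term eta in p guarantees Q <= p and x <= 1, which is what makes ln z <= z - 1 together with
  second-order bounds on exp strong enough.
\<close>

lemma exp_neg_le_quadratic:
  fixes x :: real
  assumes "0 \<le> x"
  shows "exp (- x) \<le> 1 - x + x\<^sup>2 / 2"
proof -
  have taylor: "1 + x + x\<^sup>2 / 2 \<le> exp x"
    using exp_lower_Taylor_quadratic[OF assms] .
  have pos: "0 < 1 + x + x\<^sup>2 / 2"
    using assms by (simp add: add_pos_nonneg)
  have "(1 - x + x\<^sup>2 / 2) * (1 + x + x\<^sup>2 / 2) = 1 + x ^ 4 / 4"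
    by (simp add: algebra_simps power2_eq_square power4_eq_xxxx)
  then have "1 / (1 + x + x\<^sup>2 / 2) \<le> 1 - x + x\<^sup>2 / 2"
    using pos by (simp add: divide_le_eq)
  moreover have "exp (- x) \<le> 1 / (1 + x + x\<^sup>2 / 2)"
    using taylor pos by (simp add: exp_minus field_simps)
  ultimately show ?thesis
    by linarith
qed

lemma ln_mix_exp_neg_le:
  fixes w x :: real
  assumes "0 \<le> w" "w \<le> 1" "0 \<le> x"
  shows "ln (w * exp (- x) + (1 - w)) \<le> w * (x\<^sup>2 / 2 - x)"
proof -
  have pos: "0 < w * exp (- x) + (1 - w)"
    using assms by (cases "w = 1") (auto intro: add_nonneg_pos)
  have "ln (w * exp (- x) + (1 - w)) \<le> w * (exp (- x) - 1)"
    using ln_le_minus_one[OF pos] by (simp add: algebra_simps)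
  also have "\<dots> \<le> w * (x\<^sup>2 / 2 - x)"
    using exp_neg_le_quadratic[OF assms(3)] assms(1) by (intro mult_left_mono) auto
  finally show ?thesis .
qed

lemma ln_mix_exp_neg_le_shifted:
  fixes w x :: real
  assumes "0 \<le> w" "w \<le> 1" "0 \<le> x" "x \<le> 1"
  shows "ln (w * exp (- x) + (1 - w)) \<le> (1 - w) * (x + x\<^sup>2) - x"
proof -
  have pos: "0 < w + (1 - w) * exp x"
    using assms by (cases "w = 1") (auto intro: add_nonneg_pos)
  have "w * exp (- x) + (1 - w) = exp (- x) * (w + (1 - w) * exp x)"
    by (simp add: algebra_simps exp_minus_inverse)
  then have "ln (w * exp (- x) + (1 - w)) = ln (w + (1 - w) * exp x) - x"
    using pos by (simp add: ln_mult)
  moreover have "ln (w + (1 - w) * exp x) \<le> (1 - w) * (exp x - 1)"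
    using ln_le_minus_one[OF pos] by (simp add: algebra_simps)
  moreover have "(1 - w) * (exp x - 1) \<le> (1 - w) * (x + x\<^sup>2)"
    using exp_bound[OF assms(3,4)] assms(2) by (intro mult_left_mono) auto
  ultimately show ?thesis
    by linarith
qed

lemma exploration_prob_bounds:
  fixes eta Q :: real
  assumes "0 < eta" "eta < 1" "0 \<le> Q" "Q \<le> 1"
  shows "eta \<le> (1 - eta) * Q + eta" and "Q \<le> (1 - eta) * Q + eta"
proof -
  have "0 \<le> (1 - eta) * Q" and "0 \<le> eta * (1 - Q)"
    using assms by simp_all
  then show "eta \<le> (1 - eta) * Q + eta" and "Q \<le> (1 - eta) * Q + eta"
    by (simp_all add: algebra_simps)
qed

lemma exp4at_round_label_false:
  fixes eta Q :: real
  assumes eta: "0 < eta" "eta < 1/2" and Q: "0 \<le> Q" "Q \<le> 1"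
  defines "p \<equiv> (1 - eta) * Q + eta"
  shows "1 + ln (Q * exp (- (eta / p)) + (1 - Q)) / eta \<le> 2 * eta / p"
proof -
  have p: "eta \<le> p" "Q \<le> p"
    using exploration_prob_bounds[of eta Q] eta Q unfolding p_def by simp_all
  then have "0 < p" using eta by linarith
  have "ln (Q * exp (- (eta / p)) + (1 - Q)) / eta \<le> Q * ((eta / p)\<^sup>2 / 2 - eta / p) / eta"
    using ln_mix_exp_neg_le[OF Q, of "eta / p"] eta \<open>0 < p\<close> by (simp add: divide_right_mono)
  also have "\<dots> = (Q / p) * (eta / (2 * p)) - Q / p"
    using eta \<open>0 < p\<close> by (simp add: field_simps power2_eq_square)
  also have "\<dots> \<le> 1 * (eta / (2 * p)) - Q / p"
    using p eta \<open>0 < p\<close> by (intro diff_right_mono mult_right_mono) simp_all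
  finally have "1 + ln (Q * exp (- (eta / p)) + (1 - Q)) / eta \<le> (1 - Q / p) + eta / (2 * p)"
    by simp
  also have "1 - Q / p = eta * (1 - Q) / p"
    using \<open>0 < p\<close> by (simp add: p_def field_simps)
  also have "eta * (1 - Q) / p + eta / (2 * p) \<le> 2 * eta / p"
    using eta Q \<open>0 < p\<close> by (simp add: field_simps)
  finally show ?thesis .
qed


lemma exp4at_round_label_true:
  fixes eta Q :: real
  assumes eta: "0 < eta" "eta < 1/2" and Q: "0 \<le> Q" "Q \<le> 1"
  defines "p \<equiv> (1 - eta) * Q + eta"
  shows "(1 - p) / p + ln (Q + (1 - Q) * exp (- (eta / p))) / eta \<le> eta * (1 - p) / p"
proof -
  have p: "eta \<le> p" "Q \<le> p"
    using exploration_prob_bounds[of eta Q] eta Q unfolding p_def by simp_all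
  then have "0 < p" using eta by linarith
  define c where "c = eta / p"
  have c: "0 < c" "c \<le> 1"
    using p eta \<open>0 < p\<close> by (simp_all add: c_def)
  have Q': "0 \<le> 1 - Q" "1 - Q \<le> 1"
    using Q by simp_all
  have mix: "Q + (1 - Q) * exp (- c) = (1 - Q) * exp (- c) + (1 - (1 - Q))"
    by simp
  have "1 - p = (1 - Q) - eta * (1 - Q)"
    by (simp add: p_def algebra_simps)
  then have "(1 - p) / p = ((1 - Q) - eta * (1 - Q)) / p"
    by (rule arg_cong[where f = "\<lambda>z. z / p"])
  then have lhs: "(1 - p) / p = (1 - Q) / p - c * (1 - Q)"
    by (simp add: c_def diff_divide_distrib)
  have reduce: "?thesis"
    if L: "ln (Q + (1 - Q) * exp (- c)) / eta \<le> c * X - (1 - Q) / p"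
      and X: "X - (1 - Q) \<le> (1 - Q) * (1 - eta)" for X
  proof -
    have "(1 - p) / p + ln (Q + (1 - Q) * exp (- c)) / eta \<le> c * (X - (1 - Q))"
      using L lhs by (simp add: right_diff_distrib)
    also have "\<dots> \<le> c * ((1 - Q) * (1 - eta))"
      using X c by (intro mult_left_mono) simp_all
    also have "\<dots> = eta * (1 - p) / p"
      by (simp add: c_def p_def algebra_simps)
    finally show ?thesis
      by (simp add: c_def)
  qed
  txt \<open>The quadratic bound on exp (- c) is too weak when p is small, since then c is close
    to 1; for Q \<le> 1/3 we factor out exp (- c) instead.\<close>
  show ?thesis
  proof (cases "Q \<le> 1/3")
    case True
    have "ln (Q + (1 - Q) * exp (- c)) / eta \<le> ((1 - (1 - Q)) * (c + c\<^sup>2) - c) / eta"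
      using ln_mix_exp_neg_le_shifted[OF Q' c(1)[THEN less_imp_le] c(2)] eta
      by (simp only: mix divide_right_mono)
    also have "\<dots> = c * (Q / p) - (1 - Q) / p"
      using eta \<open>0 < p\<close> by (simp add: c_def field_simps power2_eq_square)
    finally show ?thesis
    proof (rule reduce)
      have "Q / p \<le> 1"
        using p \<open>0 < p\<close> by simp
      moreover have "(2/3) * (3/2) \<le> (1 - Q) * (2 - eta)"
        using True eta by (intro mult_mono) simp_all
      ultimately show "Q / p - (1 - Q) \<le> (1 - Q) * (1 - eta)"
        by (simp add: algebra_simps)
    qed
  next
    case False
    have "ln (Q + (1 - Q) * exp (- c)) / eta \<le> (1 - Q) * (c\<^sup>2 / 2 - c) / eta"
      using ln_mix_exp_neg_le[OF Q' c(1)[THEN less_imp_le]] eta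
      by (simp only: mix divide_right_mono)
    also have "\<dots> = c * ((1 - Q) / (2 * p)) - (1 - Q) / p"
      using eta \<open>0 < p\<close> by (simp add: c_def field_simps power2_eq_square)
    finally show ?thesis
    proof (rule reduce)
      have "1 / (2 * p) \<le> 3 / 2"
        using False p \<open>0 < p\<close> by (simp add: field_simps)
      then have "(1 - Q) * (1 / (2 * p) - 1) \<le> (1 - Q) * (1 - eta)"
        using eta Q' by (intro mult_left_mono) simp_all
      then show "(1 - Q) / (2 * p) - (1 - Q) \<le> (1 - Q) * (1 - eta)"
        by (simp add: algebra_simps)
    qed
  qed
qed


lemma exp4at_round_bound_mixture:
  fixes eta Q :: real and yt yht :: bool
  assumes eta: "0 < eta" "eta < 1/2" and Q: "0 \<le> Q" "Q \<le> 1"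
  defines "p \<equiv> (1 - eta) * Q + eta"
  defines "l \<equiv> exp4at_lhat yt yht p"
  shows "(\<Sum>b\<in>{False, True}. (if b then p else 1 - p) * l b)
           + ln (Q * exp (- eta * l True) + (1 - Q) * exp (- eta * l False)) / eta
         \<le> eta * l True + eta * (p * (1 - p) * (l False)\<^sup>2) + eta * (p * (l True)\<^sup>2)"
proof (cases yht)
  case False
  then show ?thesis
    by (simp add: l_def exp4at_lhat_def ind_def)
next
  case True
  have "0 < p"
    using exploration_prob_bounds(1)[of eta Q] eta Q unfolding p_def by linarith
  show ?thesis
  proof (cases yt)
    case False
    then have "l True = 1 / p" and "l False = 0"
      using \<open>yht\<close> by (simp_all add: l_def exp4at_lhat_def ind_def)
    moreover have "1 + ln (Q * exp (- (eta / p)) + (1 - Q)) / eta \<le> 2 * eta / p"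
      using exp4at_round_label_false[OF eta Q] by (simp only: p_def)
    moreover have "eta * (p * (1 / p)\<^sup>2) = eta / p"
      using \<open>0 < p\<close> by (simp add: power2_eq_square)
    ultimately show ?thesis
      using \<open>0 < p\<close> by simp
  next
    case True
    then have "l True = 0" and "l False = 1 / p"
      using \<open>yht\<close> by (simp_all add: l_def exp4at_lhat_def ind_def)
    moreover have "(1 - p) / p + ln (Q + (1 - Q) * exp (- (eta / p))) / eta \<le> eta * (1 - p) / p"
      using exp4at_round_label_true[OF eta Q] by (simp only: p_def)
    moreover have "eta * (p * (1 - p) * (1 / p)\<^sup>2) = eta * (1 - p) / p"
      using \<open>0 < p\<close> by (simp add: power2_eq_square)
    ultimately show ?thesis
      by simp
  qed
qed

lemma sum_split_bool_valued:
  fixes q :: "'a \<Rightarrow> real" and b :: "'a \<Rightarrow> bool" and f :: "bool \<Rightarrow> real"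
  shows "(\<Sum>j\<in>A. q j * f (b j))
         = (\<Sum>j\<in>A. q j * ind (b j)) * f True + ((\<Sum>j\<in>A. q j) - (\<Sum>j\<in>A. q j * ind (b j))) * f False"
proof -
  have "q j * f (b j) = q j * ind (b j) * f True + (q j - q j * ind (b j)) * f False" for j
    by (simp add: ind_def)
  then show ?thesis
    by (simp add: sum.distrib sum_distrib_right[symmetric] sum_subtractf)
qed

lemma exp4at_round_bound:
  fixes eta :: real and q :: "nat \<Rightarrow> real" and Et :: "nat \<Rightarrow> bool" and yt yht :: bool
  assumes eta: "0 < eta" "eta < 1/2"
    and q: "\<And>i. i < N \<Longrightarrow> 0 \<le> q i" "(\<Sum>i<N. q i) = 1"
  defines "p \<equiv> exp4at_prob1 eta N Et q"
  defines "l \<equiv> exp4at_lhat yt yht p"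
  shows "(\<Sum>b\<in>{False, True}. (if b then p else 1 - p) * l b)
           + ln (\<Sum>j<N. q j * exp (- eta * l (Et j))) / eta
         \<le> eta * l True + eta * (p * (1 - p) * (l False)\<^sup>2) + eta * (p * (l True)\<^sup>2)"
proof -
  define Q where "Q = (\<Sum>i<N. q i * ind (Et i))"
  have "0 \<le> Q"
    unfolding Q_def using q by (intro sum_nonneg) (simp add: ind_def)
  moreover have "Q \<le> (\<Sum>i<N. q i)"
    unfolding Q_def using q by (intro sum_mono) (simp add: ind_def)
  moreover have "p = (1 - eta) * Q + eta"
    by (simp add: p_def exp4at_prob1_def Q_def)
  moreover have "(\<Sum>j<N. q j * exp (- eta * l (Et j)))
                 = Q * exp (- eta * l True) + (1 - Q) * exp (- eta * l False)"
    unfolding sum_split_bool_valued[where f = "\<lambda>b. exp (- eta * l b)"] q(2) Q_def ..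
  ultimately show ?thesis
    using exp4at_round_bound_mixture[OF eta, of Q yt yht] q(2) by (simp add: l_def)
qed

definition exp4at_Z :: "real \<Rightarrow> nat \<Rightarrow> (nat \<Rightarrow> nat \<Rightarrow> bool) \<Rightarrow> (nat \<Rightarrow> bool) \<Rightarrow> (nat \<Rightarrow> bool)
                  \<Rightarrow> nat \<Rightarrow> real" where
  "exp4at_Z eta N E y yh t =
     (\<Sum>j<N. exp4at_q eta N E y yh t j * exp (- eta * exp4at_l eta N E y yh t (E t j)))"

lemma exp4at_q_Suc:
  "exp4at_q eta N E y yh (Suc t) i =
     exp4at_q eta N E y yh t i * exp (- eta * exp4at_l eta N E y yh t (E t i))
       / exp4at_Z eta N E y yh t"
  by (simp add: exp4at_Z_def exp4at_l_def exp4at_p_def Let_def)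

lemma exp4at_q_pos_sum_eq_1:
  assumes "N \<ge> 1"
  shows "(\<forall>i<N. 0 < exp4at_q eta N E y yh t i) \<and> (\<Sum>i<N. exp4at_q eta N E y yh t i) = 1"
proof (induction t)
  case 0
  show ?case
    using assms by simp
next
  case (Suc t)
  have "0 < exp4at_Z eta N E y yh t"
    unfolding exp4at_Z_def using Suc assms by (intro sum_pos) auto
  then show ?case
    using Suc unfolding exp4at_q_Suc by (simp add: sum_divide_distrib[symmetric] exp4at_Z_def)
qed

lemma exp4at_Z_pos:
  assumes "N \<ge> 1"
  shows "0 < exp4at_Z eta N E y yh t"
  unfolding exp4at_Z_def using exp4at_q_pos_sum_eq_1[OF assms] assms by (intro sum_pos) auto

lemma ln_multiplicative_update:
  fixes w Z L :: "nat \<Rightarrow> real"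
  assumes update: "\<And>t. w (Suc t) = w t * exp (- eta * L t) / Z t"
    and pos: "\<And>t. 0 < w t" "\<And>t. 0 < Z t"
  shows "ln (w T) = ln (w 0) - eta * (\<Sum>t<T. L t) - (\<Sum>t<T. ln (Z t))"
proof (induction T)
  case 0
  then show ?case by simp
next
  case (Suc T)
  have "ln (w (Suc T)) = ln (w T) - eta * L T - ln (Z T)"
    using pos[of T] by (simp add: update ln_div ln_mult)
  then show ?case
    using Suc by (simp add: algebra_simps)
qed

lemma exp4at_regret_against_expert:
  fixes eta :: real and N T :: nat
    and E :: "nat \<Rightarrow> nat \<Rightarrow> bool" and y yh :: "nat \<Rightarrow> bool"
  assumes eta: "0 < eta" "eta < 1/2" and "N \<ge> 1" and "j < N"
  defines "p \<equiv> exp4at_p eta N E y yh" and "l \<equiv> exp4at_l eta N E y yh"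
  shows "(\<Sum>t<T. \<Sum>b\<in>{False, True}. (if b then p t else 1 - p t) * l t b)
           - (\<Sum>t<T. l t (E t j))
         \<le> ln (real N) / eta
           + (\<Sum>t<T. eta * l t True + eta * (p t * (1 - p t) * (l t False)\<^sup>2)
                                   + eta * (p t * (l t True)\<^sup>2))"
proof -
  define q where "q = exp4at_q eta N E y yh"
  define Z where "Z = exp4at_Z eta N E y yh"
  have q: "\<And>t i. i < N \<Longrightarrow> 0 < q t i" "\<And>t. (\<Sum>i<N. q t i) = 1"
    using exp4at_q_pos_sum_eq_1[OF \<open>N \<ge> 1\<close>] unfolding q_def by blast+
  have round: "(\<Sum>b\<in>{False, True}. (if b then p t else 1 - p t) * l t b) + ln (Z t) / eta
       \<le> eta * l t True + eta * (p t * (1 - p t) * (l t False)\<^sup>2) + eta * (p t * (l t True)\<^sup>2)"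
    for t
    using exp4at_round_bound[OF eta, of N "q t" "E t" "y t" "yh t"] q
    by (simp add: less_imp_le p_def l_def q_def Z_def exp4at_p_def exp4at_l_def exp4at_Z_def)
  have "ln (q T j) = ln (1 / real N) - eta * (\<Sum>t<T. l t (E t j)) - (\<Sum>t<T. ln (Z t))"
    using ln_multiplicative_update[of "\<lambda>t. q t j" eta "\<lambda>t. l t (E t j)" Z T]
      exp4at_q_Suc q(1)[OF \<open>j < N\<close>] exp4at_Z_pos[OF \<open>N \<ge> 1\<close>]
    unfolding q_def l_def Z_def by simp
  moreover have "ln (q T j) \<le> 0"
    using q(1)[OF \<open>j < N\<close>] member_le_sum[of j "{..<N}" "q T"] q \<open>j < N\<close>
    by (simp add: less_imp_le)
  ultimately have "- (\<Sum>t<T. ln (Z t)) / eta \<le> ln (real N) / eta + (\<Sum>t<T. l t (E t j))"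
    using eta \<open>N \<ge> 1\<close> by (simp add: ln_div field_simps)
  moreover have "(\<Sum>t<T. \<Sum>b\<in>{False, True}. (if b then p t else 1 - p t) * l t b)
                   + (\<Sum>t<T. ln (Z t)) / eta
                 \<le> (\<Sum>t<T. eta * l t True + eta * (p t * (1 - p t) * (l t False)\<^sup>2)
                                   + eta * (p t * (l t True)\<^sup>2))"
    using sum_mono[where K = "{..<T}", OF round] by (simp add: sum.distrib sum_divide_distrib)
  ultimately show ?thesis
    by linarith
qed

theorem lemma6:
  fixes eta :: real and N T :: nat
    and E :: "nat \<Rightarrow> nat \<Rightarrow> bool" and y yh :: "nat \<Rightarrow> bool"
  assumes "0 < eta" and "eta < 1/2" and "N \<ge> 1"
  shows "(\<Sum>t<T. \<Sum>b\<in>{False, True}.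
            (if b then exp4at_p eta N E y yh t else 1 - exp4at_p eta N E y yh t)
              * exp4at_l eta N E y yh t b)
         - (INF j\<in>{..<N}. \<Sum>t<T. exp4at_l eta N E y yh t (E t j))
         \<le> ln (real N) / eta
           + eta * (\<Sum>t<T. exp4at_l eta N E y yh t True)
           + eta * (\<Sum>t<T. exp4at_p eta N E y yh t * (1 - exp4at_p eta N E y yh t)
                               * (exp4at_l eta N E y yh t False)^2)
           + eta * (\<Sum>t<T. exp4at_p eta N E y yh t * (exp4at_l eta N E y yh t True)^2)"
proof -
  let ?p = "exp4at_p eta N E y yh" and ?l = "exp4at_l eta N E y yh"
  let ?bound = "ln (real N) / eta + eta * (\<Sum>t<T. ?l t True)
    + eta * (\<Sum>t<T. ?p t * (1 - ?p t) * (?l t False)\<^sup>2) + eta * (\<Sum>t<T. ?p t * (?l t True)\<^sup>2)"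
  let ?alg = "\<Sum>t<T. \<Sum>b\<in>{False, True}. (if b then ?p t else 1 - ?p t) * ?l t b"
  have "(\<Sum>t<T. eta * ?l t True + eta * (?p t * (1 - ?p t) * (?l t False)\<^sup>2)
                 + eta * (?p t * (?l t True)\<^sup>2))
        = ?bound - ln (real N) / eta"
    by (simp add: sum.distrib sum_distrib_left)
  then have "?alg - ?bound \<le> (\<Sum>t<T. ?l t (E t j))" if "j < N" for j
    using exp4at_regret_against_expert[OF assms that, where T = T and E = E and y = y and yh = yh]
    by linarith
  then have "?alg - ?bound \<le> (INF j\<in>{..<N}. \<Sum>t<T. ?l t (E t j))"
    using \<open>N \<ge> 1\<close> by (intro cINF_greatest) (auto simp: lessThan_empty_iff)
  then show ?thesis
    by linarith
qed

end
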